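(* Let $(g,p)$ be any mechanism and let $(v,x,y)$ be a random triple with values in $\mathcal V^{n\times m}\times\mathcal X^n\times\mathcal Y^m$. (a) If the law of $(v,x,y)$ is bidder-symmetric, set $\mathcal Q=\mathcal Q_1$ and $\Delta=\Delta_1$; (b) if the law of $(v,x,y)$ is item-symmetric, set $\mathcal Q=\mathcal Q_2$ and $\Delta=\Delta_2$. In either case $$\mathbb E\Big[\sum_{i=1}^n[\mathcal Q p]_i(v,x,y)\Big]=\mathbb E\Big[\sum_{i=1}^n p_i(v,x,y)\Big]$$ and $$\mathbb E\Big[\sum_{i=1}^n reg_i(v,x,y)\Big]-\mathbb E\Big[\sum_{i=1}^n[\mathcal Q\, reg]_i(v,x,y)\Big]=\mathbb E\big[\Delta(g,p;v,x,y)\big]\ge0 .$$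
   Context: Setup: there are $n$ bidders and $m$ items. Bidder contexts $x=(x_1,\dots,x_n)\in\mathcal X^n$, item contexts $y=(y_1,\dots,y_m)\in\mathcal Y^m$, and a valuation (or bid) profile is a matrix $v=(v_{ij})\in\mathcal V^{n\times m}$ with $\mathcal V\subseteq\mathbb R_{\ge0}$; $v_i$ denotes row $i$, and for $v'\in\mathcal V^{n\times m}$ (or $v_i'\in\mathcal V^m$), $(v_i',v_{-i})$ is the matrix obtained from $v$ by replacing row $i$ with $v_i'$. A mechanism is a pair $(g,p)$ with allocation rule $g:\mathcal V^{n\times m}\times\mathcal X^n\times\mathcal Y^m\to\mathbb R^{n\times m}$ and payment rule $p:\mathcal V^{n\times m}\times\mathcal X^n\times\mathcal Y^m\to\mathbb R^{n}$ (an $n\times1$ column vector). The utility of bidder $i$ with valuation $v_i$ under bid profile $b$ is $u_i(v_i,b,x,y)=\sum_{j=1}^m g_{ij}(b,x,y)v_{ij}-p_i(b,x,y)$, and the ex-post regret is $reg_i(v,x,y)=\max_{b_i'\in\mathcal V^m}u_i(v_i,(b_i',v_{-i}),x,y)-u_i(v_i,v,x,y)$. For a permutation matrix $\sigma_n\in S_n$, $\sigma_n v$ permutes the rows of $v$, $\sigma_n x$ permutes bidder contexts accordingly, $\sigma_n p$ permutes entries of $p$; for $\sigma_m\in S_m$, $v\sigma_m$ permutes columns of $v$ and $y\sigma_m$ permutes item contexts accordingly. Bidder averaging: $\mathcal Q_1 g(v,x,y)=\frac1{n!}\sum_{\sigma_n}\sigma_n^{-1}g(\sigma_nv,\sigma_nx,y)$,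 $\mathcal Q_1 p(v,x,y)=\frac1{n!}\sum_{\sigma_n}\sigma_n^{-1}p(\sigma_nv,\sigma_nx,y)$. Item averaging: $\mathcal Q_2 g(v,x,y)=\frac1{m!}\sum_{\sigma_m}g(v\sigma_m,x,y\sigma_m)\sigma_m^{-1}$, $\mathcal Q_2 p(v,x,y)=\frac1{m!}\sum_{\sigma_m}p(v\sigma_m,x,y\sigma_m)$. For an averaging $\mathcal Q$, $\mathcal Q u$ and $\mathcal Q\,reg$ denote the utility and ex-post regret induced (by the formulas above) by the mechanism $(\mathcal Q g,\mathcal Q p)$. The regret gap is $\Delta_\cdot(g,p;v,x,y)=\max_{v'\in\mathcal V^{n\times m}}\sum_{i=1}^n u_i(v_i,(v_i',v_{-i}),x,y)-\max_{v'\in\mathcal V^{n\times m}}\sum_{i=1}^n[\mathcal Q_\cdot u]_i(v_i,(v_i',v_{-i}),x,y)$ with $\mathcal Q_\cdot\in\{\mathcal Q_1,\mathcal Q_2\}$ giving $\Delta_1,\Delta_2$. The law of $(v,x,y)$ is bidder-symmetric if $(\sigma_nv,\sigma_nx,y)$ has the same law as $(v,x,y)$ for every $\sigma_n\in S_n$, and item-symmetric if $(v\sigma_m,x,y\sigma_m)$ has the same law as $(v,x,y)$ for every $\sigma_m\in S_m$. All maxima are assumed attained, and all functions measurable with finite expectations. *)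

theory Defs
  imports "HOL-Probability.Probability" "HOL-Combinatorics.Permutations"
begin

text \<open>Bidders are indexed by a finite type 'n, items by a finite type 'm.
  A valuation/bid profile is a matrix v :: 'n => 'm => real; row i is v i.
  Bidder contexts x :: 'n => 'x, item contexts y :: 'm => 'y.\<close>

type_synonym ('n,'m) prof = "'n \<Rightarrow> 'm \<Rightarrow> real"
type_synonym ('n,'m,'x,'y) alloc =
  "('n,'m) prof \<Rightarrow> ('n \<Rightarrow> 'x) \<Rightarrow> ('m \<Rightarrow> 'y) \<Rightarrow> 'n \<Rightarrow> 'm \<Rightarrow> real"
type_synonym ('n,'m,'x,'y) pay =
  "('n,'m) prof \<Rightarrow> ('n \<Rightarrow> 'x) \<Rightarrow> ('m \<Rightarrow> 'y) \<Rightarrow> 'n \<Rightarrow> real"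

definition bids :: "real set \<Rightarrow> ('m \<Rightarrow> real) set" where
  "bids V = {b. \<forall>j. b j \<in> V}"

definition profiles :: "real set \<Rightarrow> ('n,'m) prof set" where
  "profiles V = {v. \<forall>i j. v i j \<in> V}"

text \<open>u_i(v_i, b, x, y); (b_i', v_-i) is written v(i := b').\<close>
definition utility ::
  "('n::finite,'m::finite,'x,'y) alloc \<Rightarrow> ('n,'m,'x,'y) pay \<Rightarrow> 'n \<Rightarrow> ('m \<Rightarrow> real)
    \<Rightarrow> ('n,'m) prof \<Rightarrow> ('n \<Rightarrow> 'x) \<Rightarrow> ('m \<Rightarrow> 'y) \<Rightarrow> real" where
  "utility g p i vi b x y = (\<Sum>j\<in>UNIV. g b x y i j * vi j) - p b x y i"

text \<open>Ex-post regret (the maximum is written as a supremum; attainment is assumed separately).\<close>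
definition regret ::
  "real set \<Rightarrow> ('n::finite,'m::finite,'x,'y) alloc \<Rightarrow> ('n,'m,'x,'y) pay \<Rightarrow> 'n
    \<Rightarrow> ('n,'m) prof \<Rightarrow> ('n \<Rightarrow> 'x) \<Rightarrow> ('m \<Rightarrow> 'y) \<Rightarrow> real" where
  "regret V g p i v x y =
     (SUP b\<in>bids V. utility g p i (v i) (v(i := b)) x y) - utility g p i (v i) v x y"

definition max_attained ::
  "real set \<Rightarrow> ('n::finite,'m::finite,'x,'y) alloc \<Rightarrow> ('n,'m,'x,'y) pay \<Rightarrow> bool" where
  "max_attained V g p \<longleftrightarrow>
     (\<forall>v\<in>profiles V. \<forall>x y i. \<exists>b\<in>bids V. \<forall>b'\<in>bids V.
        utility g p i (v i) (v(i := b')) x y \<le> utility g p i (v i) (v(i := b)) x y)"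

definition regret_gap ::
  "real set \<Rightarrow> ('n::finite,'m::finite,'x,'y) alloc \<Rightarrow> ('n,'m,'x,'y) pay
    \<Rightarrow> ('n,'m,'x,'y) alloc \<Rightarrow> ('n,'m,'x,'y) pay
    \<Rightarrow> ('n,'m) prof \<Rightarrow> ('n \<Rightarrow> 'x) \<Rightarrow> ('m \<Rightarrow> 'y) \<Rightarrow> real" where
  "regret_gap V g p g' p' v x y =
     (SUP v'\<in>profiles V. \<Sum>i\<in>UNIV. utility g p i (v i) (v(i := v' i)) x y)
   - (SUP v'\<in>profiles V. \<Sum>i\<in>UNIV. utility g' p' i (v i) (v(i := v' i)) x y)"

text \<open>Bidder averaging Q1. A permutation matrix sigma_n corresponds to a permutation
  pi of the bidders with (sigma_n v)_k = v_(pi k); then (sigma_n^-1 r)_i = r_(pi^-1 i).\<close>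
definition Q1g :: "('n::finite,'m::finite,'x,'y) alloc \<Rightarrow> ('n,'m,'x,'y) alloc" where
  "Q1g g v x y = (\<lambda>i j. (\<Sum>\<pi>\<in>{\<pi>. \<pi> permutes (UNIV::'n set)}.
       g (\<lambda>k. v (\<pi> k)) (\<lambda>k. x (\<pi> k)) y (inv \<pi> i) j) / real (fact CARD('n)))"

definition Q1p :: "('n::finite,'m::finite,'x,'y) pay \<Rightarrow> ('n,'m,'x,'y) pay" where
  "Q1p p v x y = (\<lambda>i. (\<Sum>\<pi>\<in>{\<pi>. \<pi> permutes (UNIV::'n set)}.
       p (\<lambda>k. v (\<pi> k)) (\<lambda>k. x (\<pi> k)) y (inv \<pi> i)) / real (fact CARD('n)))"

text \<open>Item averaging Q2: (v sigma_m)_(k,l) = v_(k, tau l), (y sigma_m)_l = y_(tau l),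
  (G sigma_m^-1)_(i,j) = G_(i, tau^-1 j).\<close>
definition Q2g :: "('n::finite,'m::finite,'x,'y) alloc \<Rightarrow> ('n,'m,'x,'y) alloc" where
  "Q2g g v x y = (\<lambda>i j. (\<Sum>\<tau>\<in>{\<tau>. \<tau> permutes (UNIV::'m set)}.
       g (\<lambda>k l. v k (\<tau> l)) x (\<lambda>l. y (\<tau> l)) i (inv \<tau> j)) / real (fact CARD('m)))"

definition Q2p :: "('n::finite,'m::finite,'x,'y) pay \<Rightarrow> ('n,'m,'x,'y) pay" where
  "Q2p p v x y = (\<lambda>i. (\<Sum>\<tau>\<in>{\<tau>. \<tau> permutes (UNIV::'m set)}.
       p (\<lambda>k l. v k (\<tau> l)) x (\<lambda>l. y (\<tau> l)) i) / real (fact CARD('m)))"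

definition bidder_perm :: "('n \<Rightarrow> 'n) \<Rightarrow> ('n,'m) prof \<times> ('n \<Rightarrow> 'x) \<times> ('m \<Rightarrow> 'y)
    \<Rightarrow> ('n,'m) prof \<times> ('n \<Rightarrow> 'x) \<times> ('m \<Rightarrow> 'y)" where
  "bidder_perm \<pi> = (\<lambda>(v,x,y). (\<lambda>k. v (\<pi> k), \<lambda>k. x (\<pi> k), y))"

definition item_perm :: "('m \<Rightarrow> 'm) \<Rightarrow> ('n,'m) prof \<times> ('n \<Rightarrow> 'x) \<times> ('m \<Rightarrow> 'y)
    \<Rightarrow> ('n,'m) prof \<times> ('n \<Rightarrow> 'x) \<times> ('m \<Rightarrow> 'y)" where
  "item_perm \<tau> = (\<lambda>(v,x,y). (\<lambda>k l. v k (\<tau> l), x, \<lambda>l. y (\<tau> l)))"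

definition bidder_symmetric ::
  "(('n::finite,'m::finite) prof \<times> ('n \<Rightarrow> 'x) \<times> ('m \<Rightarrow> 'y)) measure \<Rightarrow> bool" where
  "bidder_symmetric M \<longleftrightarrow> (\<forall>\<pi>. \<pi> permutes (UNIV::'n set) \<longrightarrow>
      bidder_perm \<pi> \<in> M \<rightarrow>\<^sub>M M \<and> distr M M (bidder_perm \<pi>) = M)"

definition item_symmetric ::
  "(('n::finite,'m::finite) prof \<times> ('n \<Rightarrow> 'x) \<times> ('m \<Rightarrow> 'y)) measure \<Rightarrow> bool" where
  "item_symmetric M \<longleftrightarrow> (\<forall>\<tau>. \<tau> permutes (UNIV::'m set) \<longrightarrow>
      item_perm \<tau> \<in> M \<rightarrow>\<^sub>M M \<and> distr M M (item_perm \<tau>) = M)"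

definition finite_expectations ::
  "(('n::finite,'m::finite) prof \<times> ('n \<Rightarrow> 'x) \<times> ('m \<Rightarrow> 'y)) measure \<Rightarrow> real set
    \<Rightarrow> ('n,'m,'x,'y) alloc \<Rightarrow> ('n,'m,'x,'y) pay
    \<Rightarrow> ('n,'m,'x,'y) alloc \<Rightarrow> ('n,'m,'x,'y) pay \<Rightarrow> bool" where
  "finite_expectations M V g p g' p' \<longleftrightarrow>
     (\<forall>i. integrable M (\<lambda>(v,x,y). p v x y i)
        \<and> integrable M (\<lambda>(v,x,y). p' v x y i)
        \<and> integrable M (\<lambda>(v,x,y). \<Sum>j\<in>UNIV. g v x y i j * v i j)
        \<and> integrable M (\<lambda>(v,x,y). \<Sum>j\<in>UNIV. g' v x y i j * v i j)
        \<and> integrable M (\<lambda>(v,x,y). regret V g p i v x y)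
        \<and> integrable M (\<lambda>(v,x,y). regret V g' p' i v x y))
     \<and> integrable M (\<lambda>(v,x,y). regret_gap V g p g' p' v x y)"

end

theory Submission
  imports Defs
begin

text \<open>Averaging a mechanism over the bidder (or item) permutations makes its total utility and
  total payment, at every profile, the average of those of the original mechanism at the permuted
  profiles, while the total best-response utility can only drop, because the best response to an
  average is worth at most the average of the best responses. Under a symmetric law every permuted
  profile has the law of the original one, so expected payments and expected truthful utilities
  are unchanged and the expected regret drops by the expected drop of the total best-response
  utility. Since best responses are attained, that drop is exactly the regret gap.\<close>

type_synonym ('n,'m,'x,'y) state = "('n,'m) prof \<times> ('n \<Rightarrow> 'x) \<times> ('m \<Rightarrow> 'y)"

definition average :: "'a set \<Rightarrow> ('a \<Rightarrow> real) \<Rightarrow> real" where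
  "average P f = (\<Sum>a\<in>P. f a) / real (card P)"

lemma average_mono:
  assumes "\<And>a. a \<in> P \<Longrightarrow> f a \<le> h a"
  shows "average P f \<le> average P h"
  unfolding average_def by (simp add: divide_right_mono sum_mono assms)

lemma average_permutations:
  "average {\<pi>. \<pi> permutes (UNIV::'a::finite set)} f
     = (\<Sum>\<pi>\<in>{\<pi>. \<pi> permutes (UNIV::'a set)}. f \<pi>) / real (fact CARD('a))"
  by (simp add: average_def card_permutations)

lemma
  fixes f F :: "'s \<Rightarrow> real"
  assumes fin: "finite P" and ne: "P \<noteq> {}"
    and preserving: "\<And>a. a \<in> P \<Longrightarrow> T a \<in> M \<rightarrow>\<^sub>M M \<and> distr M M (T a) = M"
    and f: "integrable M f"
    and F: "\<And>s. s \<in> space M \<Longrightarrow> F s = average P (\<lambda>a. f (T a s))"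
  shows integrable_average_preserving: "integrable M F"
    and integral_average_preserving: "integral\<^sup>L M F = integral\<^sup>L M f"
proof -
  have f_meas: "f \<in> borel_measurable M" using f by auto
  have integrable_T: "integrable M (\<lambda>s. f (T a s))" if "a \<in> P" for a
    using integrable_distr_eq[of "T a" M M f] preserving[OF that] f_meas f by simp
  have integral_T: "(\<integral>s. f (T a s) \<partial>M) = integral\<^sup>L M f" if "a \<in> P" for a
    using integral_distr[of "T a" M M f] preserving[OF that] f_meas by simp
  have "integrable M (\<lambda>s. average P (\<lambda>a. f (T a s)))"
    unfolding average_def using integrable_T by auto
  then show "integrable M F"
    using F by (simp cong: Bochner_Integration.integrable_cong)
  have "integral\<^sup>L M F = (\<integral>s. average P (\<lambda>a. f (T a s)) \<partial>M)"
    using F by (simp cong: Bochner_Integration.integral_cong)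
  also have "\<dots> = (\<Sum>a\<in>P. \<integral>s. f (T a s) \<partial>M) / real (card P)"
    unfolding average_def using integrable_T by (simp add: integral_sum)
  also have "\<dots> = integral\<^sup>L M f"
    using integral_T fin ne by simp
  finally show "integral\<^sup>L M F = integral\<^sup>L M f" .
qed

lemma integral_le_average_preserving:
  fixes f F :: "'s \<Rightarrow> real"
  assumes fin: "finite P" and ne: "P \<noteq> {}"
    and preserving: "\<And>a. a \<in> P \<Longrightarrow> T a \<in> M \<rightarrow>\<^sub>M M \<and> distr M M (T a) = M"
    and f: "integrable M f" and F: "integrable M F"
    and le: "\<And>s. s \<in> space M \<Longrightarrow> F s \<le> average P (\<lambda>a. f (T a s))"
  shows "integral\<^sup>L M F \<le> integral\<^sup>L M f"
proof -
  let ?avg = "\<lambda>s. average P (\<lambda>a. f (T a s))"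
  have "integral\<^sup>L M F \<le> integral\<^sup>L M ?avg"
    using integrable_average_preserving[OF fin ne preserving f, where F = ?avg] F le
    by (intro integral_mono) auto
  also have "\<dots> = integral\<^sup>L M f"
    using integral_average_preserving[OF fin ne preserving f, where F = ?avg] by simp
  finally show ?thesis .
qed

definition best_utility ::
  "real set \<Rightarrow> ('n::finite,'m::finite,'x,'y) alloc \<Rightarrow> ('n,'m,'x,'y) pay \<Rightarrow> 'n
    \<Rightarrow> ('n,'m) prof \<Rightarrow> ('n \<Rightarrow> 'x) \<Rightarrow> ('m \<Rightarrow> 'y) \<Rightarrow> real" where
  "best_utility V g p i v x y = (SUP b\<in>bids V. utility g p i (v i) (v(i := b)) x y)"

definition total_payment :: "('n::finite,'m::finite,'x,'y) pay \<Rightarrow> ('n,'m,'x,'y) state \<Rightarrow> real" where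
  "total_payment p = (\<lambda>(v,x,y). \<Sum>i\<in>UNIV. p v x y i)"

definition total_utility ::
  "('n::finite,'m::finite,'x,'y) alloc \<Rightarrow> ('n,'m,'x,'y) pay \<Rightarrow> ('n,'m,'x,'y) state \<Rightarrow> real" where
  "total_utility g p = (\<lambda>(v,x,y). \<Sum>i\<in>UNIV. utility g p i (v i) v x y)"

definition total_best_utility ::
  "real set \<Rightarrow> ('n::finite,'m::finite,'x,'y) alloc \<Rightarrow> ('n,'m,'x,'y) pay
    \<Rightarrow> ('n,'m,'x,'y) state \<Rightarrow> real" where
  "total_best_utility V g p = (\<lambda>(v,x,y). \<Sum>i\<in>UNIV. best_utility V g p i v x y)"

lemma row_in_bids: "v \<in> profiles V \<Longrightarrow> v i \<in> bids V"
  by (simp add: profiles_def bids_def)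

lemma best_utility_attained:
  assumes "max_attained V g p" "v \<in> profiles V"
  obtains b where "b \<in> bids V" "best_utility V g p i v x y = utility g p i (v i) (v(i := b)) x y"
    and "\<And>b'. b' \<in> bids V \<Longrightarrow> utility g p i (v i) (v(i := b')) x y \<le> best_utility V g p i v x y"
proof -
  obtain b where b: "b \<in> bids V"
    and max: "\<And>b'. b' \<in> bids V \<Longrightarrow> utility g p i (v i) (v(i := b')) x y \<le> utility g p i (v i) (v(i := b)) x y"
    using assms unfolding max_attained_def by blast
  have "best_utility V g p i v x y = utility g p i (v i) (v(i := b)) x y"
    unfolding best_utility_def image_image[symmetric] by (rule cSup_eq_maximum) (use b max in auto)
  with b max show thesis by (intro that) auto
qed

lemma utility_le_best_utility:
  "max_attained V g p \<Longrightarrow> v \<in> profiles V \<Longrightarrow> b \<in> bids V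
    \<Longrightarrow> utility g p i (v i) (v(i := b)) x y \<le> best_utility V g p i v x y"
  by (metis best_utility_attained)

lemma SUP_total_deviation_utility:
  fixes g :: "('n::finite,'m::finite,'x,'y) alloc"
  assumes att: "max_attained V g p" and v: "v \<in> profiles V"
  shows "(SUP v'\<in>profiles V. \<Sum>i\<in>UNIV. utility g p i (v i) (v(i := v' i)) x y)
     = total_best_utility V g p (v,x,y)"
proof -
  have "\<forall>i. \<exists>b\<in>bids V. best_utility V g p i v x y = utility g p i (v i) (v(i := b)) x y"
    by (metis best_utility_attained[OF att v])
  then obtain B where B: "\<And>i. B i \<in> bids V"
    "\<And>i. best_utility V g p i v x y = utility g p i (v i) (v(i := B i)) x y"
    by metis
  have "B \<in> profiles V" using B(1) by (simp add: profiles_def bids_def)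
  moreover have "(\<Sum>i\<in>UNIV. utility g p i (v i) (v(i := v' i)) x y) \<le> total_best_utility V g p (v,x,y)"
    if "v' \<in> profiles V" for v'
    unfolding total_best_utility_def prod.case
    by (intro sum_mono utility_le_best_utility[OF att v row_in_bids[OF that]])
  ultimately show ?thesis
    unfolding image_image[symmetric] total_best_utility_def prod.case B(2)
    by (intro cSup_eq_maximum) auto
qed

lemma regret_gap_eq:
  "max_attained V g p \<Longrightarrow> max_attained V g' p' \<Longrightarrow> v \<in> profiles V
    \<Longrightarrow> regret_gap V g p g' p' v x y = total_best_utility V g p (v,x,y) - total_best_utility V g' p' (v,x,y)"
  by (simp add: regret_gap_def SUP_total_deviation_utility)

lemma sum_regret_eq:
  "(\<Sum>i\<in>UNIV. regret V g p i v x y) = total_best_utility V g p (v,x,y) - total_utility g p (v,x,y)"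
  by (simp add: regret_def best_utility_def total_best_utility_def total_utility_def sum_subtractf)

lemma sum_permutes_inv:
  assumes "\<pi> permutes (UNIV::'a::finite set)"
  shows "(\<Sum>i\<in>UNIV. F (inv \<pi> i) i) = (\<Sum>k\<in>UNIV. F k (\<pi> k) :: real)"
  using sum.permute[OF assms, of "\<lambda>i. F (inv \<pi> i) i"] assms
  by (simp add: o_def permutes_inverses)

lemma utility_Q1:
  fixes g :: "('n::finite,'m::finite,'x,'y) alloc"
  shows "utility (Q1g g) (Q1p p) i vi w x y
    = average {\<pi>. \<pi> permutes UNIV} (\<lambda>\<pi>. utility g p (inv \<pi> i) vi (\<lambda>k. w (\<pi> k)) (\<lambda>k. x (\<pi> k)) y)"
  unfolding average_permutations utility_def Q1g_def Q1p_def
  by (simp add: sum_divide_distrib[symmetric] sum_distrib_right sum_subtractf diff_divide_distrib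
      times_divide_eq_left[symmetric] sum.swap[where A=UNIV])

lemma total_payment_Q1p:
  fixes p :: "('n::finite,'m::finite,'x,'y) pay"
  shows "total_payment (Q1p p) s = average {\<pi>. \<pi> permutes UNIV} (\<lambda>\<pi>. total_payment p (bidder_perm \<pi> s))"
proof -
  obtain v x y where s: "s = (v, x, y)" by (metis prod_cases3)
  have "(\<Sum>i\<in>UNIV. p (\<lambda>k. v (\<pi> k)) (\<lambda>k. x (\<pi> k)) y (inv \<pi> i)) = total_payment p (bidder_perm \<pi> s)"
    if "\<pi> permutes UNIV" for \<pi>
    using sum_permutes_inv[OF that, of "\<lambda>k i. p (\<lambda>k. v (\<pi> k)) (\<lambda>k. x (\<pi> k)) y k"]
    by (simp add: s total_payment_def bidder_perm_def)
  then show ?thesis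
    unfolding average_permutations total_payment_def Q1p_def s prod.case
    by (simp add: sum_divide_distrib[symmetric] sum.swap[where A=UNIV])
qed

lemma total_utility_Q1:
  fixes g :: "('n::finite,'m::finite,'x,'y) alloc"
  shows "total_utility (Q1g g) (Q1p p) s
    = average {\<pi>. \<pi> permutes UNIV} (\<lambda>\<pi>. total_utility g p (bidder_perm \<pi> s))"
proof -
  obtain v x y where s: "s = (v, x, y)" by (metis prod_cases3)
  have "(\<Sum>i\<in>UNIV. utility g p (inv \<pi> i) (v i) (\<lambda>k. v (\<pi> k)) (\<lambda>k. x (\<pi> k)) y)
      = total_utility g p (bidder_perm \<pi> s)"
    if "\<pi> permutes UNIV" for \<pi>
    using sum_permutes_inv[OF that, of "\<lambda>k i. utility g p k (v i) (\<lambda>k. v (\<pi> k)) (\<lambda>k. x (\<pi> k)) y"]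
    by (simp add: s total_utility_def bidder_perm_def)
  then show ?thesis
    unfolding total_utility_def utility_Q1 s prod.case
    by (simp add: average_permutations sum_divide_distrib[symmetric] sum.swap[where A=UNIV])
qed

lemma best_utility_Q1_le:
  fixes g :: "('n::finite,'m::finite,'x,'y) alloc"
  assumes att: "max_attained V g p" and v: "v \<in> profiles V"
  shows "best_utility V (Q1g g) (Q1p p) i v x y
    \<le> average {\<pi>. \<pi> permutes UNIV} (\<lambda>\<pi>. best_utility V g p (inv \<pi> i) (\<lambda>k. v (\<pi> k)) (\<lambda>k. x (\<pi> k)) y)"
  unfolding best_utility_def[of V "Q1g g"]
proof (rule cSUP_least)
  show "(bids V :: ('m \<Rightarrow> real) set) \<noteq> {}" using row_in_bids[OF v] by blast
  fix b :: "'m \<Rightarrow> real" assume b: "b \<in> bids V"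
  show "utility (Q1g g) (Q1p p) i (v i) (v(i := b)) x y
    \<le> average {\<pi>. \<pi> permutes UNIV} (\<lambda>\<pi>. best_utility V g p (inv \<pi> i) (\<lambda>k. v (\<pi> k)) (\<lambda>k. x (\<pi> k)) y)"
    unfolding utility_Q1
  proof (rule average_mono)
    fix \<pi> :: "'n \<Rightarrow> 'n" assume "\<pi> \<in> {\<pi>. \<pi> permutes UNIV}"
    then have \<pi>: "\<pi> permutes UNIV" by simp
    \<comment> \<open>in the permuted profile, bidder i's deviation to b is a deviation of bidder inv \<pi> i\<close>
    have deviation: "(\<lambda>k. (v(i := b)) (\<pi> k)) = (\<lambda>k. v (\<pi> k))(inv \<pi> i := b)"
    proof
      fix k
      have "(\<pi> k = i) = (k = inv \<pi> i)" using permutes_inv_eq[OF \<pi>] by metis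
      then show "(v(i := b)) (\<pi> k) = ((\<lambda>k. v (\<pi> k))(inv \<pi> i := b)) k" by simp
    qed
    have row: "v (\<pi> (inv \<pi> i)) = v i"
      using permutes_inverses[OF \<pi>] by simp
    have "(\<lambda>k. v (\<pi> k)) \<in> profiles V"
      using v by (simp add: profiles_def)
    from utility_le_best_utility[OF att this b, of "inv \<pi> i" "\<lambda>k. x (\<pi> k)" y]
    show "utility g p (inv \<pi> i) (v i) (\<lambda>k. (v(i := b)) (\<pi> k)) (\<lambda>k. x (\<pi> k)) y
      \<le> best_utility V g p (inv \<pi> i) (\<lambda>k. v (\<pi> k)) (\<lambda>k. x (\<pi> k)) y"
      unfolding deviation row .
  qed
qed

lemma total_best_utility_Q1_le:
  fixes g :: "('n::finite,'m::finite,'x,'y) alloc"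
  assumes att: "max_attained V g p" and v: "fst s \<in> profiles V"
  shows "total_best_utility V (Q1g g) (Q1p p) s
    \<le> average {\<pi>. \<pi> permutes UNIV} (\<lambda>\<pi>. total_best_utility V g p (bidder_perm \<pi> s))"
proof -
  obtain v x y where s: "s = (v, x, y)" by (metis prod_cases3)
  let ?best = "\<lambda>\<pi> k. best_utility V g p k (\<lambda>k. v (\<pi> k)) (\<lambda>k. x (\<pi> k)) y"
  have "total_best_utility V (Q1g g) (Q1p p) s
      \<le> (\<Sum>i\<in>UNIV. average {\<pi>. \<pi> permutes UNIV} (\<lambda>\<pi>. ?best \<pi> (inv \<pi> i)))"
    unfolding total_best_utility_def s prod.case
    using best_utility_Q1_le[OF att] v s by (simp add: sum_mono)
  also have "\<dots> = average {\<pi>. \<pi> permutes UNIV} (\<lambda>\<pi>. \<Sum>i\<in>UNIV. ?best \<pi> (inv \<pi> i))"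
    by (simp add: average_permutations sum_divide_distrib[symmetric] sum.swap[where A=UNIV])
  also have "\<dots> = average {\<pi>. \<pi> permutes UNIV} (\<lambda>\<pi>. total_best_utility V g p (bidder_perm \<pi> s))"
  proof -
    have "(\<Sum>i\<in>UNIV. ?best \<pi> (inv \<pi> i)) = total_best_utility V g p (bidder_perm \<pi> s)"
      if "\<pi> permutes UNIV" for \<pi>
      using sum_permutes_inv[OF that, of "\<lambda>k i. ?best \<pi> k"]
      by (simp add: s total_best_utility_def bidder_perm_def)
    then show ?thesis by (simp add: average_def)
  qed
  finally show ?thesis .
qed

lemma utility_Q2:
  fixes g :: "('n::finite,'m::finite,'x,'y) alloc"
  shows "utility (Q2g g) (Q2p p) i vi w x y
    = average {\<tau>. \<tau> permutes UNIV}
        (\<lambda>\<tau>. utility g p i (\<lambda>l. vi (\<tau> l)) (\<lambda>k l. w k (\<tau> l)) x (\<lambda>l. y (\<tau> l)))"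
proof -
  have "(\<Sum>j\<in>UNIV. G (inv \<tau> j) * vi j) = (\<Sum>l\<in>UNIV. G l * vi (\<tau> l))"
    if "\<tau> permutes (UNIV::'m set)" for \<tau> and G :: "'m \<Rightarrow> real"
    using sum_permutes_inv[OF that, of "\<lambda>l j. G l * vi j"] .
  then show ?thesis
    unfolding average_permutations utility_def Q2g_def Q2p_def
    by (simp add: sum_divide_distrib[symmetric] sum_distrib_right sum_subtractf diff_divide_distrib
        times_divide_eq_left[symmetric] sum.swap[where A=UNIV])
qed

lemma total_payment_Q2p:
  fixes p :: "('n::finite,'m::finite,'x,'y) pay"
  shows "total_payment (Q2p p) s = average {\<tau>. \<tau> permutes UNIV} (\<lambda>\<tau>. total_payment p (item_perm \<tau> s))"
  unfolding average_permutations total_payment_def Q2p_def item_perm_def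
  by (simp add: sum_divide_distrib[symmetric] sum.swap[where A=UNIV] split: prod.split)

lemma total_utility_Q2:
  fixes g :: "('n::finite,'m::finite,'x,'y) alloc"
  shows "total_utility (Q2g g) (Q2p p) s
    = average {\<tau>. \<tau> permutes UNIV} (\<lambda>\<tau>. total_utility g p (item_perm \<tau> s))"
  unfolding total_utility_def utility_Q2 item_perm_def
  by (simp add: average_permutations sum_divide_distrib[symmetric] sum.swap[where A=UNIV]
      split: prod.split)

lemma best_utility_Q2_le:
  fixes g :: "('n::finite,'m::finite,'x,'y) alloc"
  assumes att: "max_attained V g p" and v: "v \<in> profiles V"
  shows "best_utility V (Q2g g) (Q2p p) i v x y
    \<le> average {\<tau>. \<tau> permutes UNIV} (\<lambda>\<tau>. best_utility V g p i (\<lambda>k l. v k (\<tau> l)) x (\<lambda>l. y (\<tau> l)))"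
  unfolding best_utility_def[of V "Q2g g"]
proof (rule cSUP_least)
  show "(bids V :: ('m \<Rightarrow> real) set) \<noteq> {}" using row_in_bids[OF v] by blast
  fix b :: "'m \<Rightarrow> real" assume b: "b \<in> bids V"
  show "utility (Q2g g) (Q2p p) i (v i) (v(i := b)) x y
    \<le> average {\<tau>. \<tau> permutes UNIV} (\<lambda>\<tau>. best_utility V g p i (\<lambda>k l. v k (\<tau> l)) x (\<lambda>l. y (\<tau> l)))"
    unfolding utility_Q2
  proof (rule average_mono)
    fix \<tau> :: "'m \<Rightarrow> 'm"
    have deviation: "(\<lambda>k l. (v(i := b)) k (\<tau> l)) = (\<lambda>k l. v k (\<tau> l))(i := (\<lambda>l. b (\<tau> l)))"
      by (auto simp: fun_eq_iff)
    have "(\<lambda>l. b (\<tau> l)) \<in> bids V" using b by (simp add: bids_def)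
    moreover have "(\<lambda>k l. v k (\<tau> l)) \<in> profiles V" using v by (simp add: profiles_def)
    ultimately show "utility g p i (\<lambda>l. v i (\<tau> l)) (\<lambda>k l. (v(i := b)) k (\<tau> l)) x (\<lambda>l. y (\<tau> l))
      \<le> best_utility V g p i (\<lambda>k l. v k (\<tau> l)) x (\<lambda>l. y (\<tau> l))"
      unfolding deviation using utility_le_best_utility[OF att] by blast
  qed
qed

lemma total_best_utility_Q2_le:
  fixes g :: "('n::finite,'m::finite,'x,'y) alloc"
  assumes att: "max_attained V g p" and v: "fst s \<in> profiles V"
  shows "total_best_utility V (Q2g g) (Q2p p) s
    \<le> average {\<tau>. \<tau> permutes UNIV} (\<lambda>\<tau>. total_best_utility V g p (item_perm \<tau> s))"
proof -
  obtain v x y where s: "s = (v, x, y)" by (metis prod_cases3)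
  have "total_best_utility V (Q2g g) (Q2p p) s
      \<le> (\<Sum>i\<in>UNIV. average {\<tau>. \<tau> permutes UNIV}
            (\<lambda>\<tau>. best_utility V g p i (\<lambda>k l. v k (\<tau> l)) x (\<lambda>l. y (\<tau> l))))"
    unfolding total_best_utility_def s prod.case
    using best_utility_Q2_le[OF att] v s by (simp add: sum_mono)
  also have "\<dots> = average {\<tau>. \<tau> permutes UNIV} (\<lambda>\<tau>. total_best_utility V g p (item_perm \<tau> s))"
    unfolding total_best_utility_def item_perm_def s
    by (simp add: average_permutations sum_divide_distrib[symmetric] sum.swap[where A=UNIV])
  finally show ?thesis .
qed

lemma
  fixes g :: "('n::finite,'m::finite,'x,'y) alloc"
  assumes pay: "\<And>i. integrable M (\<lambda>(v,x,y). p v x y i)"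
    and valuation: "\<And>i. integrable M (\<lambda>(v,x,y). \<Sum>j\<in>UNIV. g v x y i j * v i j)"
    and regrets: "\<And>i. integrable M (\<lambda>(v,x,y). regret V g p i v x y)"
  shows integrable_total_payment: "integrable M (total_payment p)"
    and integrable_total_utility: "integrable M (total_utility g p)"
    and integrable_total_best_utility: "integrable M (total_best_utility V g p)"
proof -
  have payment_eq: "total_payment p = (\<lambda>s. \<Sum>i\<in>UNIV. (\<lambda>(v,x,y). p v x y i) s)"
    by (auto simp: total_payment_def fun_eq_iff)
  show "integrable M (total_payment p)"
    unfolding payment_eq
    by (intro Bochner_Integration.integrable_sum pay)
  have utility_eq: "total_utility g p
      = (\<lambda>s. \<Sum>i\<in>UNIV. (\<lambda>(v,x,y). \<Sum>j\<in>UNIV. g v x y i j * v i j) s - (\<lambda>(v,x,y). p v x y i) s)"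
    by (auto simp: total_utility_def utility_def fun_eq_iff)
  show utility: "integrable M (total_utility g p)"
    unfolding utility_eq
    by (intro Bochner_Integration.integrable_sum Bochner_Integration.integrable_diff pay valuation)
  have best_eq: "total_best_utility V g p
      = (\<lambda>s. (\<Sum>i\<in>UNIV. (\<lambda>(v,x,y). regret V g p i v x y) s) + total_utility g p s)"
    by (auto simp: sum_regret_eq fun_eq_iff)
  show "integrable M (total_best_utility V g p)"
    unfolding best_eq
    by (intro Bochner_Integration.integrable_add Bochner_Integration.integrable_sum regrets utility)
qed

lemma expected_regret_of_averaged_mechanism:
  fixes g g' :: "('n::finite,'m::finite,'x,'y) alloc" and p p' :: "('n,'m,'x,'y) pay"
    and T :: "'a \<Rightarrow> ('n,'m,'x,'y) state \<Rightarrow> ('n,'m,'x,'y) state"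
  assumes fin: "finite P" and ne: "P \<noteq> {}"
    and preserving: "\<And>a. a \<in> P \<Longrightarrow> T a \<in> M \<rightarrow>\<^sub>M M \<and> distr M M (T a) = M"
    and in_V: "space M \<subseteq> {(v,x,y). v \<in> profiles V}"
    and att: "max_attained V g p" and att': "max_attained V g' p'"
    and fe: "finite_expectations M V g p g' p'"
    and payment: "\<And>s. total_payment p' s = average P (\<lambda>a. total_payment p (T a s))"
    and utility: "\<And>s. total_utility g' p' s = average P (\<lambda>a. total_utility g p (T a s))"
    and best: "\<And>s. fst s \<in> profiles V
      \<Longrightarrow> total_best_utility V g' p' s \<le> average P (\<lambda>a. total_best_utility V g p (T a s))"
  shows "integral\<^sup>L M (total_payment p') = integral\<^sup>L M (total_payment p)
    \<and> (\<integral>s. (case s of (v,x,y) \<Rightarrow> \<Sum>i\<in>UNIV. regret V g p i v x y) \<partial>M)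
       - (\<integral>s. (case s of (v,x,y) \<Rightarrow> \<Sum>i\<in>UNIV. regret V g' p' i v x y) \<partial>M)
       = (\<integral>s. (case s of (v,x,y) \<Rightarrow> regret_gap V g p g' p' v x y) \<partial>M)
    \<and> (\<integral>s. (case s of (v,x,y) \<Rightarrow> regret_gap V g p g' p' v x y) \<partial>M) \<ge> 0"
proof -
  have profile: "fst s \<in> profiles V" if "s \<in> space M" for s
    using in_V that by auto
  have fe_g: "\<And>i. integrable M (\<lambda>(v,x,y). p v x y i)"
      "\<And>i. integrable M (\<lambda>(v,x,y). \<Sum>j\<in>UNIV. g v x y i j * v i j)"
      "\<And>i. integrable M (\<lambda>(v,x,y). regret V g p i v x y)"
    and fe_g': "\<And>i. integrable M (\<lambda>(v,x,y). p' v x y i)"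
      "\<And>i. integrable M (\<lambda>(v,x,y). \<Sum>j\<in>UNIV. g' v x y i j * v i j)"
      "\<And>i. integrable M (\<lambda>(v,x,y). regret V g' p' i v x y)"
    using fe unfolding finite_expectations_def by blast+
  note int_pay = integrable_total_payment[OF fe_g]
  note int_util = integrable_total_utility[OF fe_g] integrable_total_utility[OF fe_g']
  note int_best = integrable_total_best_utility[OF fe_g] integrable_total_best_utility[OF fe_g']
  have "integral\<^sup>L M (total_payment p') = integral\<^sup>L M (total_payment p)"
    by (rule integral_average_preserving[OF fin ne preserving int_pay payment])
  moreover have "integral\<^sup>L M (total_utility g' p') = integral\<^sup>L M (total_utility g p)"
    by (rule integral_average_preserving[OF fin ne preserving int_util(1) utility])
  moreover have "integral\<^sup>L M (total_best_utility V g' p') \<le> integral\<^sup>L M (total_best_utility V g p)"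
    using integral_le_average_preserving[OF fin ne preserving int_best best[OF profile]] .
  moreover have "(\<integral>s. (case s of (v,x,y) \<Rightarrow> regret_gap V g p g' p' v x y) \<partial>M)
      = (\<integral>s. total_best_utility V g p s - total_best_utility V g' p' s \<partial>M)"
    using profile regret_gap_eq[OF att att'] by (intro Bochner_Integration.integral_cong) auto
  ultimately show ?thesis
    using int_util int_best by (simp add: sum_regret_eq case_prod_beta')
qed

theorem theorem1:
  fixes V :: "real set"
    and g :: "('n::finite,'m::finite,'x,'y) alloc"
    and p :: "('n,'m,'x,'y) pay"
    and M :: "(('n,'m) prof \<times> ('n \<Rightarrow> 'x) \<times> ('m \<Rightarrow> 'y)) measure"
  assumes V_nonneg: "V \<subseteq> {0..}"
    and prob: "prob_space M"
    and in_V: "space M \<subseteq> {(v,x,y). v \<in> profiles V}"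
    and attained: "max_attained V g p"
  shows
   "(bidder_symmetric M \<and> max_attained V (Q1g g) (Q1p p)
       \<and> finite_expectations M V g p (Q1g g) (Q1p p)
     \<longrightarrow>
       (\<integral>s. (case s of (v,x,y) \<Rightarrow> \<Sum>i\<in>UNIV. Q1p p v x y i) \<partial>M)
         = (\<integral>s. (case s of (v,x,y) \<Rightarrow> \<Sum>i\<in>UNIV. p v x y i) \<partial>M)
     \<and> (\<integral>s. (case s of (v,x,y) \<Rightarrow> \<Sum>i\<in>UNIV. regret V g p i v x y) \<partial>M)
         - (\<integral>s. (case s of (v,x,y) \<Rightarrow> \<Sum>i\<in>UNIV. regret V (Q1g g) (Q1p p) i v x y) \<partial>M)
         = (\<integral>s. (case s of (v,x,y) \<Rightarrow> regret_gap V g p (Q1g g) (Q1p p) v x y) \<partial>M)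
     \<and> (\<integral>s. (case s of (v,x,y) \<Rightarrow> regret_gap V g p (Q1g g) (Q1p p) v x y) \<partial>M) \<ge> 0)
  \<and> (item_symmetric M \<and> max_attained V (Q2g g) (Q2p p)
       \<and> finite_expectations M V g p (Q2g g) (Q2p p)
     \<longrightarrow>
       (\<integral>s. (case s of (v,x,y) \<Rightarrow> \<Sum>i\<in>UNIV. Q2p p v x y i) \<partial>M)
         = (\<integral>s. (case s of (v,x,y) \<Rightarrow> \<Sum>i\<in>UNIV. p v x y i) \<partial>M)
     \<and> (\<integral>s. (case s of (v,x,y) \<Rightarrow> \<Sum>i\<in>UNIV. regret V g p i v x y) \<partial>M)
         - (\<integral>s. (case s of (v,x,y) \<Rightarrow> \<Sum>i\<in>UNIV. regret V (Q2g g) (Q2p p) i v x y) \<partial>M)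
         = (\<integral>s. (case s of (v,x,y) \<Rightarrow> regret_gap V g p (Q2g g) (Q2p p) v x y) \<partial>M)
     \<and> (\<integral>s. (case s of (v,x,y) \<Rightarrow> regret_gap V g p (Q2g g) (Q2p p) v x y) \<partial>M) \<ge> 0)"
proof -
  have perms_n: "finite {\<pi>. \<pi> permutes (UNIV::'n set)}" "{\<pi>. \<pi> permutes (UNIV::'n set)} \<noteq> {}"
    by (simp add: finite_permutations) (use permutes_id in blast)
  have perms_m: "finite {\<tau>. \<tau> permutes (UNIV::'m set)}" "{\<tau>. \<tau> permutes (UNIV::'m set)} \<noteq> {}"
    by (simp add: finite_permutations) (use permutes_id in blast)
  note bidders = expected_regret_of_averaged_mechanism[OF perms_n _ in_V attained _ _
      total_payment_Q1p total_utility_Q1 total_best_utility_Q1_le[OF attained], unfolded total_payment_def]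
  note items = expected_regret_of_averaged_mechanism[OF perms_m _ in_V attained _ _
      total_payment_Q2p total_utility_Q2 total_best_utility_Q2_le[OF attained], unfolded total_payment_def]
  show ?thesis
    by (intro conjI[OF impI impI]; elim conjE)
      (rule bidders items; auto simp: bidder_symmetric_def item_symmetric_def)+
qed

end
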